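(* Every concatenated stabiliser code family has infinite disjointness, i.e. $\lim_{l\to\infty}\Delta(l)=\infty$, where $\Delta(l)$ is the disjointness of the $l$-th code of the family.
   Context: A concatenated stabiliser code family is built from a sequence of non-trivial $[[n_i,1,d_i]]$ stabiliser quantum error-correcting codes ($i\in\mathbb{N}$) with $n_i$ bounded by a constant independent of $i$: the $l$-th code $\mathcal{C}_l$ is the $[[\prod_{i=1}^l n_i,1,\prod_{i=1}^l d_i]]$ code obtained by concatenating the first $l$ codes of the sequence (each physical qubit at one level is encoded into a block of the next code). Disjointness: for an integer $c\ge1$, a collection of representatives of a logical operator is $c$-disjoint if no physical qubit lies in the support of more than $c$ of them; the unnormalised $c$-disjointness $\Delta'_c$ is the largest integer such that every logical Pauli operator admits at least $\Delta'_c$ representatives forming a $c$-disjoint collection; $\Delta_c=\Delta'_c/c$, and the disjointness is $\Delta=\max_{c\in\mathbb{Z}_+}\Delta_c$. *)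

theory Defs
  imports Complex_Main
begin

text \<open>Pauli operators on qubits indexed by naturals, modulo phases, in the binary
  symplectic representation: at each qubit a pair (x-bit, z-bit);
  (False,False) = I, (True,False) = X, (False,True) = Z, (True,True) = Y.\<close>

type_synonym pauli = "nat \<Rightarrow> bool \<times> bool"

definition pid :: pauli where
  "pid = (\<lambda>_. (False, False))"

definition pmul :: "pauli \<Rightarrow> pauli \<Rightarrow> pauli" where
  "pmul p q = (\<lambda>i. (fst (p i) \<noteq> fst (q i), snd (p i) \<noteq> snd (q i)))"

definition pauli_on :: "nat \<Rightarrow> pauli set" where
  "pauli_on n = {p. \<forall>i\<ge>n. p i = (False, False)}"

definition supp :: "pauli \<Rightarrow> nat set" where
  "supp p = {i. p i \<noteq> (False, False)}"

definition anti1 :: "bool \<times> bool \<Rightarrow> bool \<times> bool \<Rightarrow> bool" where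
  "anti1 a b = ((fst a \<and> snd b) \<noteq> (snd a \<and> fst b))"

definition commutes :: "pauli \<Rightarrow> pauli \<Rightarrow> bool" where
  "commutes p q = even (card {i. anti1 (p i) (q i)})"

definition stab_group_1 :: "nat \<Rightarrow> pauli set \<Rightarrow> bool" where
  "stab_group_1 n S \<longleftrightarrow> 1 \<le> n \<and> S \<subseteq> pauli_on n \<and> pid \<in> S \<and>
     (\<forall>p\<in>S. \<forall>q\<in>S. pmul p q \<in> S) \<and> (\<forall>p\<in>S. \<forall>q\<in>S. commutes p q) \<and>
     card S = 2 ^ (n - 1)"

definition normaliser :: "nat \<Rightarrow> pauli set \<Rightarrow> pauli set" where
  "normaliser n S = {p \<in> pauli_on n. \<forall>s\<in>S. commutes p s}"

definition distance :: "nat \<Rightarrow> pauli set \<Rightarrow> nat" where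
  "distance n S = Min ((\<lambda>p. card (supp p)) ` (normaliser n S - S))"

definition stab_code :: "nat \<Rightarrow> pauli set \<Rightarrow> nat \<Rightarrow> bool" where
  "stab_code n S d \<longleftrightarrow> stab_group_1 n S \<and> distance n S = d"

text \<open>Nontrivial logical Pauli operators, each given as its set of representatives
  (a coset of the stabiliser group inside the normaliser).\<close>
definition logicals :: "nat \<Rightarrow> pauli set \<Rightarrow> pauli set set" where
  "logicals n S = {(pmul p) ` S | p. p \<in> normaliser n S - S}"

definition c_disjoint :: "nat \<Rightarrow> pauli set \<Rightarrow> bool" where
  "c_disjoint c R \<longleftrightarrow> (\<forall>q. card {r \<in> R. q \<in> supp r} \<le> c)"

definition udisj :: "nat \<Rightarrow> pauli set \<Rightarrow> nat \<Rightarrow> nat" where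
  "udisj n S c = (GREATEST m. \<forall>L \<in> logicals n S.
      \<exists>R. R \<subseteq> L \<and> finite R \<and> card R \<ge> m \<and> c_disjoint c R)"

definition disjointness :: "nat \<Rightarrow> pauli set \<Rightarrow> real" where
  "disjointness n S = Sup {real (udisj n S c) / real c | c. c \<ge> 1}"

text \<open>Concatenation: outer code (m,T), inner code (k,S2) with chosen logical
  representatives xb, zb.  Qubit j of block i (the block encoding outer qubit i)
  has index i*k + j.\<close>
definition enc :: "nat \<Rightarrow> pauli \<Rightarrow> pauli \<Rightarrow> pauli \<Rightarrow> pauli" where
  "enc k xb zb p = (\<lambda>a. let i = a div k; j = a mod k in
      ((fst (p i) \<and> fst (xb j)) \<noteq> (snd (p i) \<and> fst (zb j)),
       (fst (p i) \<and> snd (xb j)) \<noteq> (snd (p i) \<and> snd (zb j))))"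

definition block :: "nat \<Rightarrow> nat \<Rightarrow> pauli \<Rightarrow> pauli" where
  "block k i t = (\<lambda>j. if j < k then t (i * k + j) else (False, False))"

definition concat_stab :: "nat \<Rightarrow> pauli set \<Rightarrow> nat \<Rightarrow> pauli set \<Rightarrow> pauli \<Rightarrow> pauli \<Rightarrow> pauli set" where
  "concat_stab m T k S2 xb zb =
     {pmul (enc k xb zb s) t | s t. s \<in> T \<and> t \<in> pauli_on (m * k) \<and>
        (\<forall>i<m. block k i t \<in> S2)}"

text \<open>The concatenated family: fam l is the (l+1)-th code C_{l+1}, i.e. the
  concatenation of codes 0..l of the sequence (code l innermost).\<close>
fun fam :: "(nat \<Rightarrow> nat) \<Rightarrow> (nat \<Rightarrow> pauli set) \<Rightarrow> (nat \<Rightarrow> pauli) \<Rightarrow> (nat \<Rightarrow> pauli)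
            \<Rightarrow> nat \<Rightarrow> nat \<times> pauli set" where
  "fam n S xb zb 0 = (n 0, S 0)"
| "fam n S xb zb (Suc l) = (case fam n S xb zb l of (m, T) \<Rightarrow>
      (m * n (Suc l), concat_stab m T (n (Suc l)) (S (Suc l)) (xb (Suc l)) (zb (Suc l))))"

end

theory Submission
  imports Defs
begin

text \<open>Concatenating with an inner code of distance at least two multiplies the disjointness
  by at least \<open>4 / 3\<close>. A nontrivial logical operator of the concatenated code decodes
  blockwise to a logical operator of the outer code. Given \<open>c\<close>-disjoint representatives
  of the latter, replace every nontrivial letter of each of them by the corresponding inner
  logical operator times a stabiliser \<open>u\<close>, the same \<open>u\<close> in every block: letting \<open>u\<close> range
  over the stabiliser group \<open>S\<close> yields \<open>card S\<close> times as many representatives. As the inner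
  code has no logical operator of weight one, every value that an inner logical operator takes
  at a qubit is also taken by a stabiliser, so at most three quarters of the \<open>u\<close> act
  nontrivially at any qubit, and the new collection is \<open>(c * 3 / 4 * card S)\<close>-disjoint.
  Thus the \<open>l\<close>-th code has disjointness at least \<open>(4 / 3) ^ l\<close>.\<close>

section \<open>The Pauli group modulo phases\<close>

definition qubit_mul :: "bool \<times> bool \<Rightarrow> bool \<times> bool \<Rightarrow> bool \<times> bool" where
  "qubit_mul a b = (fst a \<noteq> fst b, snd a \<noteq> snd b)"

lemma pmul_apply: "pmul p q i = qubit_mul (p i) (q i)"
  by (simp add: pmul_def qubit_mul_def)

lemma pid_apply [simp]: "pid i = (False, False)"
  by (simp add: pid_def)

interpretation pmul: comm_monoid pmul pid
  by unfold_locales (auto simp: pmul_def pid_def)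

lemma pmul_self [simp]: "pmul p p = pid"
  by (simp add: pmul_def pid_def)

lemma pmul_cancel_left [simp]: "pmul p (pmul p q) = q"
  by (simp add: pmul.assoc[symmetric])

lemma pmul_left_cancel: "pmul p q = pmul p r \<longleftrightarrow> q = r"
  by (metis pmul_cancel_left)

lemma pmul_eq_pid_iff: "pmul p q = pid \<longleftrightarrow> p = q"
  by (auto simp: pmul_def pid_def fun_eq_iff prod_eq_iff)

lemma pmul_swap_eq: "pmul a s = pmul b t \<Longrightarrow> pmul a b = pmul s t"
  by (simp add: pmul_def fun_eq_iff prod_eq_iff) metis

lemma pid_in_pauli_on [simp]: "pid \<in> pauli_on n"
  by (simp add: pauli_on_def)

lemma pauli_on_pmul: "p \<in> pauli_on n \<Longrightarrow> q \<in> pauli_on n \<Longrightarrow> pmul p q \<in> pauli_on n"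
  by (simp add: pauli_on_def pmul_def)

lemma pauli_on_outside: "p \<in> pauli_on n \<Longrightarrow> n \<le> i \<Longrightarrow> p i = (False, False)"
  by (simp add: pauli_on_def)

lemma pauli_on_nonzero_less: "p \<in> pauli_on n \<Longrightarrow> p i \<noteq> (False, False) \<Longrightarrow> i < n"
  using pauli_on_outside[of p n i] by linarith

lemma supp_subset_pauli_on: "p \<in> pauli_on n \<Longrightarrow> supp p \<subseteq> {..<n}"
  using pauli_on_nonzero_less by (auto simp: supp_def)

lemma supp_eq_empty_iff: "supp p = {} \<longleftrightarrow> p = pid"
  by (auto simp: supp_def pid_def fun_eq_iff)

lemma pauli_on_Suc: "pauli_on (Suc n) = (\<lambda>(p, v). p(n := v)) ` (pauli_on n \<times> UNIV)"
proof (intro set_eqI iffI)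
  fix p assume p: "p \<in> pauli_on (Suc n)"
  then have "p(n := (False, False)) \<in> pauli_on n" by (auto simp: pauli_on_def)
  then show "p \<in> (\<lambda>(p, v). p(n := v)) ` (pauli_on n \<times> UNIV)"
    by (intro image_eqI[of _ _ "(p(n := (False, False)), p n)"]) auto
qed (auto simp: pauli_on_def)

lemma inj_on_fun_upd_pauli_on: "inj_on (\<lambda>(p, v). p(n := v)) (pauli_on n \<times> UNIV)"
proof (rule inj_onI, clarify)
  fix p v q w assume p: "p \<in> pauli_on n" and q: "q \<in> pauli_on n" and e: "p(n := v) = q(n := w)"
  have "p = q"
  proof
    fix i show "p i = q i"
      using fun_cong[OF e, of i] p q by (cases "i = n") (auto simp: pauli_on_def)
  qed
  then show "p = q \<and> v = w" using fun_cong[OF e, of n] by simp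
qed

lemma card_qubit: "card (UNIV :: (bool \<times> bool) set) = 4"
proof -
  have e: "(UNIV :: (bool \<times> bool) set) = {(False, False), (False, True), (True, False), (True, True)}"
    by auto
  show ?thesis unfolding e by simp
qed

lemma finite_pauli_on [simp]: "finite (pauli_on n)"
  and card_pauli_on: "card (pauli_on n) = 4 ^ n"
proof (induction n)
  case 0
  have "pauli_on 0 = {pid}" by (auto simp: pauli_on_def pid_def)
  then show "finite (pauli_on 0)" "card (pauli_on 0) = 4 ^ 0" by simp_all
next
  case (Suc n)
  show "finite (pauli_on (Suc n))" unfolding pauli_on_Suc using Suc.IH(1) by simp
  have "card (pauli_on (Suc n)) = card (pauli_on n \<times> (UNIV :: (bool \<times> bool) set))"
    unfolding pauli_on_Suc by (rule card_image[OF inj_on_fun_upd_pauli_on])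
  then show "card (pauli_on (Suc n)) = 4 ^ Suc n"
    using Suc.IH(2) by (simp add: card_cartesian_product card_qubit)
qed

definition pauli_subgroup :: "nat \<Rightarrow> pauli set \<Rightarrow> bool" where
  "pauli_subgroup n G \<longleftrightarrow> G \<subseteq> pauli_on n \<and> pid \<in> G \<and> (\<forall>g\<in>G. \<forall>h\<in>G. pmul g h \<in> G)"

lemma pauli_subgroupD:
  assumes "pauli_subgroup n G"
  shows "G \<subseteq> pauli_on n" "pid \<in> G" "g \<in> G \<Longrightarrow> h \<in> G \<Longrightarrow> pmul g h \<in> G" "finite G"
proof -
  show "G \<subseteq> pauli_on n" "pid \<in> G" "g \<in> G \<Longrightarrow> h \<in> G \<Longrightarrow> pmul g h \<in> G"
    using assms by (simp_all add: pauli_subgroup_def)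
  show "finite G"
    using assms finite_subset[of G "pauli_on n"] by (simp add: pauli_subgroup_def)
qed

lemma card_pauli_subgroup_pos: "pauli_subgroup n G \<Longrightarrow> 0 < card G"
  using pauli_subgroupD(2,4) by (auto simp: card_gt_0_iff)

definition anticomm_qubits :: "pauli \<Rightarrow> pauli \<Rightarrow> nat set" where
  "anticomm_qubits p q = {i. anti1 (p i) (q i)}"

lemma commutes_iff_even: "commutes p q \<longleftrightarrow> even (card (anticomm_qubits p q))"
  by (simp add: commutes_def anticomm_qubits_def)

lemma anti1_sym: "anti1 a b = anti1 b a"
  by (auto simp: anti1_def)

lemma anti1_id [simp]: "\<not> anti1 (False, False) b" "\<not> anti1 b (False, False)"
  by (auto simp: anti1_def)

lemma anticomm_qubits_sym: "anticomm_qubits p q = anticomm_qubits q p"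
  by (simp add: anticomm_qubits_def anti1_sym)

lemma commutes_sym: "commutes p q \<longleftrightarrow> commutes q p"
  by (simp add: commutes_iff_even anticomm_qubits_sym)

lemma anti1_self [simp]: "\<not> anti1 a a"
  by (auto simp: anti1_def)

lemma commutes_self [simp]: "commutes p p"
  by (simp add: commutes_iff_even anticomm_qubits_def)

lemma commutes_pid [simp]: "commutes pid q" "commutes q pid"
  by (simp_all add: commutes_iff_even anticomm_qubits_def)

lemma anticomm_qubits_subset:
  assumes "q \<in> pauli_on n"
  shows "anticomm_qubits p q \<subseteq> {..<n}"
proof
  fix i assume "i \<in> anticomm_qubits p q"
  then have "q i \<noteq> (False, False)"
    by (auto simp: anticomm_qubits_def)
  then show "i \<in> {..<n}"
    using pauli_on_nonzero_less[OF assms] by simp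
qed

lemma finite_anticomm_qubits: "q \<in> pauli_on n \<Longrightarrow> finite (anticomm_qubits p q)"
  by (rule finite_subset[OF anticomm_qubits_subset]) simp_all

lemma anticomm_qubits_pmul:
  "anticomm_qubits (pmul p q) r =
    (anticomm_qubits p r - anticomm_qubits q r) \<union> (anticomm_qubits q r - anticomm_qubits p r)"
  by (auto simp: anticomm_qubits_def pmul_def anti1_def)

lemma card_sym_diff_parity:
  assumes "finite A" "finite B"
  shows "even (card ((A - B) \<union> (B - A))) \<longleftrightarrow> (even (card A) \<longleftrightarrow> even (card B))"
proof -
  have "card ((A - B) \<union> (B - A)) = card (A - B) + card (B - A)"
    using assms by (intro card_Un_disjoint) auto
  moreover have "card A = card (A \<inter> B) + card (A - B)" "card B = card (A \<inter> B) + card (B - A)"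
    using assms card_Int_Diff[of A B] card_Int_Diff[of B A] by (simp_all add: Int_commute)
  ultimately show ?thesis
    by simp blast
qed

lemma commutes_pmul_left:
  "r \<in> pauli_on n \<Longrightarrow> commutes (pmul p q) r \<longleftrightarrow> (commutes p r \<longleftrightarrow> commutes q r)"
  unfolding commutes_iff_even anticomm_qubits_pmul
  by (rule card_sym_diff_parity) (simp_all add: finite_anticomm_qubits)

lemma commutes_pmul_right:
  assumes "p \<in> pauli_on n"
  shows "commutes p (pmul q r) \<longleftrightarrow> (commutes p q \<longleftrightarrow> commutes p r)"
proof -
  have "commutes p (pmul q r) = commutes (pmul q r) p"
    and "commutes p q = commutes q p" and "commutes p r = commutes r p"
    by (rule commutes_sym)+
  then show ?thesis
    using commutes_pmul_left[OF assms] by simp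
qed

definition single_qubit :: "nat \<Rightarrow> bool \<times> bool \<Rightarrow> pauli" where
  "single_qubit q v = (\<lambda>i. if i = q then v else (False, False))"

lemma single_qubit_in_pauli_on: "q < n \<Longrightarrow> single_qubit q v \<in> pauli_on n"
  by (simp add: single_qubit_def pauli_on_def)

lemma supp_single_qubit: "v \<noteq> (False, False) \<Longrightarrow> supp (single_qubit q v) = {q}"
  by (auto simp: supp_def single_qubit_def)

lemma commutes_single_qubit: "commutes (single_qubit q v) p \<longleftrightarrow> \<not> anti1 v (p q)"
proof -
  have "anticomm_qubits (single_qubit q v) p = (if anti1 v (p q) then {q} else {})"
    by (auto simp: anticomm_qubits_def single_qubit_def)
  then show ?thesis by (simp add: commutes_iff_even)
qed

section \<open>A subgroup and its normaliser\<close>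

lemma card_half_by_involution:
  assumes "finite A" and "\<And>x. x \<in> A \<Longrightarrow> f x \<in> A" and "\<And>x. x \<in> A \<Longrightarrow> f (f x) = x"
    and "\<And>x. x \<in> A \<Longrightarrow> P (f x) \<longleftrightarrow> \<not> P x"
  shows "2 * card {x\<in>A. \<not> P x} = card A"
proof -
  have "bij_betw f {x\<in>A. P x} {x\<in>A. \<not> P x}"
    by (rule bij_betw_byWitness[where f' = f]) (use assms in auto)
  then have "card {x\<in>A. P x} = card {x\<in>A. \<not> P x}"
    by (rule bij_betw_same_card)
  moreover have "card {x\<in>A. P x} + card {x\<in>A. \<not> P x} = card A"
    using assms(1) by (subst card_Un_disjoint[symmetric]) (auto intro: arg_cong[where f = card])
  ultimately show ?thesis by simp
qed

text \<open>Multiplication by a single-qubit Pauli that anticommutes with \<open>g\<close> swaps the operators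
  commuting and anticommuting with \<open>g\<close>.\<close>
lemma card_anticommuting:
  assumes g: "g \<in> pauli_on k" "g \<noteq> pid"
  shows "2 * card {p \<in> pauli_on k. \<not> commutes p g} = 4 ^ k"
proof -
  obtain q where q: "g q \<noteq> (False, False)"
    using g(2) by (auto simp: pid_def)
  define v where "v = (if fst (g q) then (False, True) else (True, False))"
  have "anti1 v (g q)"
    using q by (cases "g q") (auto simp: v_def anti1_def)
  then have e: "single_qubit q v \<in> pauli_on k" "\<not> commutes (single_qubit q v) g"
    using pauli_on_nonzero_less[OF g(1) q]
    by (simp_all add: single_qubit_in_pauli_on commutes_single_qubit)
  have "2 * card {p \<in> pauli_on k. \<not> commutes p g} = card (pauli_on k)"
    by (rule card_half_by_involution[where f = "pmul (single_qubit q v)"])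
      (use e g(1) in \<open>simp_all add: pauli_on_pmul commutes_pmul_left\<close>)
  then show ?thesis by (simp add: card_pauli_on)
qed

lemma card_anticommuting_in_subgroup:
  assumes G: "pauli_subgroup k G" and p: "p \<in> pauli_on k" "p \<notin> normaliser k G"
  shows "2 * card {g \<in> G. \<not> commutes p g} = card G"
proof -
  obtain g0 where g0: "g0 \<in> G" "\<not> commutes p g0"
    using p by (auto simp: normaliser_def)
  show ?thesis
    by (rule card_half_by_involution[where f = "pmul g0"])
      (use G g0 p(1) in \<open>simp_all add: pauli_subgroupD commutes_pmul_right\<close>)
qed

lemma card_filter_eq_sum: "finite A \<Longrightarrow> card {x\<in>A. P x} = (\<Sum>x\<in>A. if P x then 1 else 0)"
  by (simp add: sum.If_cases Int_def conj_commute)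

text \<open>Double counting of the anticommuting pairs in \<open>pauli_on k \<times> G\<close>.\<close>
theorem card_mult_card_normaliser:
  assumes G: "pauli_subgroup k G"
  shows "card G * card (normaliser k G) = 4 ^ k"
proof -
  define P where "P = pauli_on k"
  define N where "N = normaliser k G"
  have finG: "finite G" and GP: "G \<subseteq> P" and pidG: "pid \<in> G"
    using pauli_subgroupD[OF G] by (simp_all add: P_def)
  have NP: "N \<subseteq> P" by (auto simp: N_def P_def normaliser_def)
  have "(\<Sum>g\<in>G. 2 * card {p \<in> P. \<not> commutes p g}) = (\<Sum>g\<in>G - {pid}. 2 * card {p \<in> P. \<not> commutes p g})"
    using finG pidG by (simp add: sum.remove)
  also have "\<dots> = (\<Sum>g\<in>G - {pid}. 4 ^ k)"
    using GP by (intro sum.cong) (auto simp: P_def card_anticommuting)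
  also have "\<dots> = (card G - 1) * 4 ^ k"
    using finG pidG by simp
  finally have by_operator: "2 * (\<Sum>g\<in>G. card {p \<in> P. \<not> commutes p g}) = (card G - 1) * 4 ^ k"
    by (simp add: sum_distrib_left)
  have "(\<Sum>p\<in>P. 2 * card {g \<in> G. \<not> commutes p g}) = (\<Sum>p\<in>P - N. 2 * card {g \<in> G. \<not> commutes p g})"
    by (intro sum.mono_neutral_right) (auto simp: P_def N_def normaliser_def card_eq_0_iff)
  also have "\<dots> = (\<Sum>p\<in>P - N. card G)"
    by (intro sum.cong) (auto simp: P_def N_def card_anticommuting_in_subgroup[OF G])
  also have "\<dots> = (4 ^ k - card N) * card G"
    using NP by (simp add: P_def card_Diff_subset finite_subset card_pauli_on)
  finally have by_pauli: "2 * (\<Sum>p\<in>P. card {g \<in> G. \<not> commutes p g}) = (4 ^ k - card N) * card G"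
    by (simp add: sum_distrib_left)
  have "(\<Sum>g\<in>G. card {p \<in> P. \<not> commutes p g}) = (\<Sum>p\<in>P. card {g \<in> G. \<not> commutes p g})"
    using finG by (simp add: P_def card_filter_eq_sum) (rule sum.swap)
  then have "card G * 4 ^ k - 4 ^ k = card G * 4 ^ k - card N * card G"
    using by_operator by_pauli by (simp add: diff_mult_distrib diff_mult_distrib2 mult.commute)
  moreover have "4 ^ k \<le> card G * 4 ^ k"
    using card_pauli_subgroup_pos[OF G] by simp
  moreover have "card N * card G \<le> card G * 4 ^ k"
    using card_mono[OF _ NP] by (simp add: P_def card_pauli_on)
  ultimately have "4 ^ k = card N * card G"
    by (metis diff_diff_cancel)
  then show ?thesis
    by (simp add: N_def mult.commute)
qed

section \<open>Stabiliser codes encoding one qubit\<close>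

definition logical_op :: "pauli \<Rightarrow> pauli \<Rightarrow> bool \<times> bool \<Rightarrow> pauli" where
  "logical_op xb zb v = pmul (if fst v then xb else pid) (if snd v then zb else pid)"

lemma logical_op_apply:
  "logical_op xb zb v j = ((fst v \<and> fst (xb j)) \<noteq> (snd v \<and> fst (zb j)),
                           (fst v \<and> snd (xb j)) \<noteq> (snd v \<and> snd (zb j)))"
  by (auto simp: logical_op_def pmul_def)

lemma logical_op_pmul:
  "pmul (logical_op xb zb v) (logical_op xb zb w) = logical_op xb zb (qubit_mul v w)"
  by (auto simp: logical_op_def qubit_mul_def pmul_def fun_eq_iff)

lemma logical_op_zero [simp]: "logical_op xb zb (False, False) = pid"
  by (simp add: logical_op_def)

lemma qubit_mul_eq_zero_iff: "qubit_mul v w = (False, False) \<longleftrightarrow> v = w"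
  by (auto simp: qubit_mul_def prod_eq_iff)

locale encoded_qubit =
  fixes k :: nat and S :: "pauli set" and xb zb :: pauli
  assumes stab_group: "stab_group_1 k S"
    and xb_normaliser: "xb \<in> normaliser k S" and zb_normaliser: "zb \<in> normaliser k S"
    and xb_zb_anticommute: "\<not> commutes xb zb"
begin

abbreviation logical :: "bool \<times> bool \<Rightarrow> pauli" where
  "logical \<equiv> logical_op xb zb"

lemma subgroup: "pauli_subgroup k S"
  using stab_group by (simp add: stab_group_1_def pauli_subgroup_def)

lemma stab_subset: "S \<subseteq> pauli_on k"
  and pid_in_stab: "pid \<in> S"
  and stab_pmul: "s \<in> S \<Longrightarrow> t \<in> S \<Longrightarrow> pmul s t \<in> S"
  and finite_stab: "finite S"
  using pauli_subgroupD[OF subgroup] by simp_all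

lemma card_stab: "card S = 2 ^ (k - 1)" and one_le_k: "1 \<le> k"
  using stab_group by (simp_all add: stab_group_1_def)

lemma normaliser_commutes: "p \<in> normaliser k S \<Longrightarrow> s \<in> S \<Longrightarrow> commutes p s"
  by (simp add: normaliser_def)

lemma stab_commutes_xb: "s \<in> S \<Longrightarrow> commutes s xb"
  using normaliser_commutes[OF xb_normaliser, of s] commutes_sym[of xb s] by simp

lemma stab_commutes_zb: "s \<in> S \<Longrightarrow> commutes s zb"
  using normaliser_commutes[OF zb_normaliser, of s] commutes_sym[of zb s] by simp

lemma xb_notin_stab: "xb \<notin> S"
proof
  assume "xb \<in> S"
  then have "commutes zb xb"
    using normaliser_commutes[OF zb_normaliser] by blast
  then show False
    using xb_zb_anticommute commutes_sym[of xb zb] by simp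
qed

lemma xb_in_pauli_on: "xb \<in> pauli_on k"
  and zb_in_pauli_on: "zb \<in> pauli_on k"
  using xb_normaliser zb_normaliser by (simp_all add: normaliser_def)

lemma logical_in_pauli_on: "logical v \<in> pauli_on k"
  using xb_in_pauli_on zb_in_pauli_on by (auto simp: logical_op_def intro!: pauli_on_pmul)

lemma commutes_logical:
  "p \<in> pauli_on k \<Longrightarrow> commutes p (logical v) \<longleftrightarrow> ((fst v \<longrightarrow> commutes p xb) \<longleftrightarrow> (snd v \<longrightarrow> commutes p zb))"
  unfolding logical_op_def by (subst commutes_pmul_right) auto

lemma logical_commutes_xb: "commutes (logical v) xb \<longleftrightarrow> \<not> snd v"
  and logical_commutes_zb: "commutes (logical v) zb \<longleftrightarrow> \<not> fst v"
  using commutes_logical[of xb v] commutes_logical[of zb v]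
    xb_normaliser zb_normaliser xb_zb_anticommute
  by (auto simp: normaliser_def commutes_sym[of zb xb] commutes_sym[of _ "logical v"])

lemma logical_in_normaliser: "logical v \<in> normaliser k S"
proof -
  have "commutes s (logical v)" if s: "s \<in> S" for s
    using commutes_logical[of s v] s stab_subset stab_commutes_xb[OF s] stab_commutes_zb[OF s] by auto
  then show ?thesis
    using logical_in_pauli_on by (auto simp: normaliser_def commutes_sym[of "logical v"])
qed

lemma logical_in_stab_iff: "logical v \<in> S \<longleftrightarrow> v = (False, False)"
proof
  assume "logical v \<in> S"
  then have "commutes (logical v) xb" "commutes (logical v) zb"
    using stab_commutes_xb stab_commutes_zb by blast+
  then show "v = (False, False)"
    using logical_commutes_xb logical_commutes_zb by (cases v) simp
qed (simp add: pid_in_stab)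

lemma logical_stab_inj:
  assumes "s \<in> S" "t \<in> S" "pmul (logical v) s = pmul (logical w) t"
  shows "v = w" "s = t"
proof -
  have "pmul (logical v) (logical w) = pmul s t"
    using assms(3) by (rule pmul_swap_eq)
  then have "logical (qubit_mul v w) \<in> S"
    using stab_pmul[OF assms(1,2)] by (simp add: logical_op_pmul)
  then show "v = w"
    by (simp add: logical_in_stab_iff qubit_mul_eq_zero_iff)
  then show "s = t"
    using assms(3) by (simp add: pmul_left_cancel)
qed

lemma stab_subset_normaliser: "S \<subseteq> normaliser k S"
  using stab_group stab_subset by (auto simp: stab_group_1_def normaliser_def)

definition stab_with_logicals :: "pauli set" where
  "stab_with_logicals = (\<lambda>(v, s). pmul (logical v) s) ` (UNIV \<times> S)"

lemma stab_with_logicals_iff: "g \<in> stab_with_logicals \<longleftrightarrow> (\<exists>v s. g = pmul (logical v) s \<and> s \<in> S)"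
  by (auto simp: stab_with_logicals_def image_iff)

lemma pauli_subgroup_stab_with_logicals: "pauli_subgroup k stab_with_logicals"
  unfolding pauli_subgroup_def
proof (intro conjI ballI)
  show "stab_with_logicals \<subseteq> pauli_on k"
    using logical_in_pauli_on stab_subset by (auto simp: stab_with_logicals_iff intro!: pauli_on_pmul)
  show "pid \<in> stab_with_logicals"
    using pid_in_stab logical_op_zero by (metis stab_with_logicals_iff pmul.left_neutral)
  fix g h assume "g \<in> stab_with_logicals" "h \<in> stab_with_logicals"
  then obtain v s w t where gh: "g = pmul (logical v) s" "s \<in> S" "h = pmul (logical w) t" "t \<in> S"
    by (auto simp: stab_with_logicals_iff)
  then have "pmul g h = pmul (logical (qubit_mul v w)) (pmul s t)"
    by (simp add: logical_op_pmul[symmetric] pmul.assoc pmul.commute pmul.left_commute)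
  then show "pmul g h \<in> stab_with_logicals"
    unfolding stab_with_logicals_iff using stab_pmul[OF gh(2,4)] by blast
qed

lemma card_stab_with_logicals: "card stab_with_logicals = 4 * card S"
proof -
  have "inj_on (\<lambda>(v, s). pmul (logical v) s) (UNIV \<times> S)"
  proof (rule inj_onI)
    fix x y assume "x \<in> UNIV \<times> S" "y \<in> UNIV \<times> S"
      and "(\<lambda>(v, s). pmul (logical v) s) x = (\<lambda>(v, s). pmul (logical v) s) y"
    then show "x = y"
      using logical_stab_inj[of "snd x" "snd y" "fst x" "fst y"]
      by (auto simp: case_prod_beta prod_eq_iff)
  qed
  then show ?thesis
    by (simp add: stab_with_logicals_def card_image card_cartesian_product card_qubit)
qed

lemma normaliser_stab_with_logicals:
  assumes "p \<in> normaliser k S" "commutes p xb" "commutes p zb"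
  shows "p \<in> normaliser k stab_with_logicals"
proof -
  have "p \<in> pauli_on k"
    using assms(1) by (simp add: normaliser_def)
  moreover have "commutes p (pmul (logical v) s)" if "s \<in> S" for v s
    using assms normaliser_commutes[OF assms(1) that] commutes_logical[OF \<open>p \<in> pauli_on k\<close>, of v]
      commutes_pmul_right[OF \<open>p \<in> pauli_on k\<close>] by simp
  ultimately show ?thesis
    by (auto simp: normaliser_def stab_with_logicals_iff)
qed

text \<open>The normaliser of the extended group has only \<open>4 ^ k / card stab_with_logicals = card S\<close>
  elements, so it cannot contain more than \<open>S\<close>.\<close>
lemma normaliser_commuting_with_logicals:
  assumes w: "w \<in> normaliser k S" "commutes w xb" "commutes w zb"
  shows "w \<in> S"
proof (rule ccontr)
  assume "w \<notin> S"
  have "insert w S \<subseteq> normaliser k stab_with_logicals"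
    using w stab_subset_normaliser stab_commutes_xb stab_commutes_zb normaliser_stab_with_logicals
    by blast
  then have "card S + 1 \<le> card (normaliser k stab_with_logicals)"
    using card_mono[of "normaliser k stab_with_logicals" "insert w S"] \<open>w \<notin> S\<close> finite_stab
    by (simp add: normaliser_def)
  moreover have "card stab_with_logicals * card (normaliser k stab_with_logicals) = 4 ^ k"
    by (rule card_mult_card_normaliser[OF pauli_subgroup_stab_with_logicals])
  moreover have "4 ^ k = 4 * card S * card S"
  proof -
    obtain j where "k = Suc j"
      using one_le_k by (cases k) auto
    moreover have "(4::nat) ^ j = 2 ^ j * 2 ^ j"
      by (simp flip: power_mult_distrib)
    ultimately show ?thesis
      by (simp add: card_stab)
  qed
  ultimately show False
    using card_stab_with_logicals card_pauli_subgroup_pos[OF subgroup] by simp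
qed

end

lemma qubit_anticommuting_pair:
  assumes "\<tau> \<noteq> (False, False)"
  obtains v w where "anti1 \<tau> v" "anti1 \<tau> w"
    "\<And>a b. anti1 v a \<Longrightarrow> anti1 w b \<Longrightarrow> a \<noteq> \<tau> \<Longrightarrow> b \<noteq> \<tau> \<Longrightarrow> qubit_mul a b = \<tau>"
proof -
  obtain x z where \<tau>: "\<tau> = (x, z)" by fastforce
  consider "x" "z" | "x" "\<not> z" | "\<not> x" "z"
    using assms \<tau> by auto
  then show ?thesis
  proof cases
    case 1 then show ?thesis
      using that[of "(True, False)" "(False, True)"] \<tau> by (auto simp: anti1_def qubit_mul_def)
  next
    case 2 then show ?thesis
      using that[of "(False, True)" "(True, True)"] \<tau> by (auto simp: anti1_def qubit_mul_def)
  next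
    case 3 then show ?thesis
      using that[of "(True, False)" "(True, True)"] \<tau> by (auto simp: anti1_def qubit_mul_def)
  qed
qed

locale inner_code = encoded_qubit +
  assumes distance_ge_2: "2 \<le> distance k S"
begin

lemma single_qubit_in_stab:
  assumes q: "q < k" and v: "v \<noteq> (False, False)" and commuting: "\<And>u. u \<in> S \<Longrightarrow> \<not> anti1 v (u q)"
  shows "single_qubit q v \<in> S"
proof (rule ccontr)
  assume "single_qubit q v \<notin> S"
  moreover have "single_qubit q v \<in> normaliser k S"
    using single_qubit_in_pauli_on[OF q] commuting by (simp add: normaliser_def commutes_single_qubit)
  ultimately have "card (supp (single_qubit q v)) \<in> (\<lambda>p. card (supp p)) ` (normaliser k S - S)"
    by blast
  moreover have "finite ((\<lambda>p. card (supp p)) ` (normaliser k S - S))"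
    by (simp add: normaliser_def)
  ultimately have "distance k S \<le> card (supp (single_qubit q v))"
    unfolding distance_def by (rule Min_le[rotated])
  then have "distance k S \<le> 1"
    by (simp add: supp_single_qubit[OF v])
  then show False
    using distance_ge_2 by simp
qed

text \<open>The distance bound enters here: a single-qubit Pauli commuting with every stabiliser
  is itself a stabiliser.\<close>
lemma stab_realises_qubit_value:
  assumes p: "p \<in> normaliser k S"
  obtains u where "u \<in> S" "u q = p q"
proof (cases "p q = (False, False)")
  case True
  then show ?thesis using that pid_in_stab by simp
next
  case False
  have q: "q < k"
    using p False pauli_on_nonzero_less by (auto simp: normaliser_def)
  have anticommuting_stab: "\<exists>u\<in>S. anti1 v (u q)" if v: "anti1 (p q) v" for v
  proof (rule ccontr)
    assume "\<not> ?thesis"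
    moreover have "v \<noteq> (False, False)"
      using v by auto
    ultimately have "single_qubit q v \<in> S"
      using single_qubit_in_stab[OF q] by blast
    then have "commutes p (single_qubit q v)"
      by (rule normaliser_commutes[OF p])
    then have "\<not> anti1 v (p q)"
      using commutes_sym[of p] commutes_single_qubit by simp
    then show False
      using v anti1_sym by metis
  qed
  have "\<exists>u\<in>S. u q = p q"
  proof (rule ccontr)
    assume none: "\<not> ?thesis"
    obtain v w where vw: "anti1 (p q) v" "anti1 (p q) w"
      and sum: "\<And>a b. anti1 v a \<Longrightarrow> anti1 w b \<Longrightarrow> a \<noteq> p q \<Longrightarrow> b \<noteq> p q \<Longrightarrow> qubit_mul a b = p q"
      using qubit_anticommuting_pair[OF False] by blast
    obtain u1 u2 where u: "u1 \<in> S" "anti1 v (u1 q)" "u2 \<in> S" "anti1 w (u2 q)"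
      using anticommuting_stab[OF vw(1)] anticommuting_stab[OF vw(2)] by blast
    then have "pmul u1 u2 q = p q"
      using none sum[of "u1 q" "u2 q"] by (simp add: pmul_apply)
    then show False
      using none stab_pmul[OF u(1,3)] by blast
  qed
  then show ?thesis
    using that by blast
qed

text \<open>The values at qubit \<open>q\<close> of the stabilisers form a subgroup of the four single-qubit
  Paulis, so each realised value is taken by at least a quarter of \<open>S\<close>.\<close>
lemma card_coset_nontrivial_at:
  assumes p: "p \<in> normaliser k S"
  shows "4 * card {u \<in> S. pmul p u q \<noteq> (False, False)} \<le> 3 * card S"
proof -
  obtain u0 where u0: "u0 \<in> S" "u0 q = p q"
    using stab_realises_qubit_value[OF p] .
  define E where "E = {u \<in> S. u q = p q}"
  have finE: "finite E" and ES: "E \<subseteq> S"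
    using finite_stab by (auto simp: E_def)
  have fibre: "card {u \<in> S. u q = v} \<le> card E" for v
  proof (cases "\<exists>s\<in>S. s q = v")
    case True
    then obtain s where s: "s \<in> S" "s q = v" by blast
    have "inj_on (pmul (pmul s u0)) {u \<in> S. u q = v}"
      by (rule inj_onI) (simp add: pmul_left_cancel)
    moreover have "pmul (pmul s u0) ` {u \<in> S. u q = v} \<subseteq> E"
      using s u0 stab_pmul by (auto simp: E_def pmul_apply qubit_mul_def prod_eq_iff)
    ultimately show ?thesis
      by (rule card_inj_on_le[OF _ _ finE])
  next
    case False
    then have "{u \<in> S. u q = v} = {}"
      by auto
    then show ?thesis
      by (simp only: card.empty le0)
  qed
  have "card S = card (\<Union>v. {u \<in> S. u q = v})"
    by (rule arg_cong[where f = card]) auto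
  also have "\<dots> = (\<Sum>v\<in>UNIV. card {u \<in> S. u q = v})"
    by (rule card_UN_disjoint) (auto simp: finite_stab)
  also have "\<dots> \<le> (\<Sum>v\<in>(UNIV :: (bool \<times> bool) set). card E)"
    by (rule sum_mono) (rule fibre)
  also have "\<dots> = 4 * card E"
    by (simp add: card_qubit)
  finally have "card S \<le> 4 * card E" .
  moreover have "{u \<in> S. pmul p u q \<noteq> (False, False)} = S - E"
    by (auto simp: E_def pmul_def prod_eq_iff)
  ultimately show ?thesis
    using card_Diff_subset[OF finE ES] card_mono[OF finite_stab ES] by simp
qed

lemma two_le_card_stab: "2 \<le> card S"
proof -
  have "k \<noteq> 1"
  proof
    assume "k = 1"
    then have "card S = 1"
      by (simp add: card_stab)
    then obtain x where "S = {x}"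
      by (rule card_1_singletonE)
    then have "S = {pid}"
      using pid_in_stab by simp
    then have "single_qubit 0 (True, False) \<in> S"
      using \<open>k = 1\<close> \<open>S = {pid}\<close> by (intro single_qubit_in_stab) auto
    then have "single_qubit 0 (True, False) 0 = (False, False)"
      using \<open>S = {pid}\<close> by simp
    then show False
      by (simp add: single_qubit_def)
  qed
  then have "2 ^ 1 \<le> card S"
    unfolding card_stab using one_le_k by (intro power_increasing) auto
  then show ?thesis by simp
qed

definition overlap_bound :: nat where
  "overlap_bound = 3 * card S div 4"

lemma card_coset_nontrivial_at_le:
  assumes "p \<in> normaliser k S"
  shows "card {u \<in> S. pmul p u q \<noteq> (False, False)} \<le> overlap_bound"
proof -
  have "4 * card {u \<in> S. pmul p u q \<noteq> (False, False)} div 4 \<le> 3 * card S div 4"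
    by (rule div_le_mono[OF card_coset_nontrivial_at[OF assms]])
  then show ?thesis
    by (simp add: overlap_bound_def)
qed

lemma one_le_overlap_bound: "1 \<le> overlap_bound"
proof -
  have "4 div 4 \<le> 3 * card S div 4"
    using two_le_card_stab by (intro div_le_mono) simp
  then show ?thesis
    by (simp add: overlap_bound_def)
qed

lemma overlap_bound_ratio: "4 / 3 \<le> real (card S) / real overlap_bound"
proof -
  have "4 * overlap_bound \<le> 3 * card S"
    unfolding overlap_bound_def by (metis div_times_less_eq_dividend mult.commute)
  then have "4 * real overlap_bound \<le> 3 * real (card S)"
    by (metis of_nat_le_iff of_nat_mult of_nat_numeral)
  then show ?thesis
    using one_le_overlap_bound by (simp add: field_simps)
qed

end

section \<open>Blocks of a concatenated code\<close>

lemma block_pmul: "block k i (pmul P Q) = pmul (block k i P) (block k i Q)"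
  by (auto simp: block_def pmul_def fun_eq_iff)

lemma block_pid [simp]: "block k i pid = pid"
  by (simp add: block_def fun_eq_iff)

lemma block_in_pauli_on: "block k i P \<in> pauli_on k"
  by (simp add: block_def pauli_on_def)

lemma enc_apply: "enc k xb zb p a = logical_op xb zb (p (a div k)) (a mod k)"
  by (simp add: enc_def logical_op_apply Let_def)

lemma enc_pmul: "pmul (enc k xb zb p) (enc k xb zb q) = enc k xb zb (pmul p q)"
  by (auto simp: enc_def pmul_def Let_def fun_eq_iff)

lemma enc_pid [simp]: "enc k xb zb pid = pid"
  by (simp add: enc_def Let_def fun_eq_iff)

lemma div_mod_block [simp]:
  fixes i j k :: nat
  assumes "j < k"
  shows "(i * k + j) div k = i" "(i * k + j) mod k = j"
  using assms by simp_all

lemma block_index_less: "0 < k \<Longrightarrow> a < m * k \<Longrightarrow> a div k < (m :: nat)"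
  by (simp add: div_less_iff_less_mult)

lemma anticomm_qubits_blocks:
  assumes k: "0 < k" and P: "P \<in> pauli_on (m * k)"
  shows "anticomm_qubits P Q = (\<Union>i<m. (\<lambda>j. i * k + j) ` anticomm_qubits (block k i P) (block k i Q))"
proof (intro set_eqI iffI)
  fix a assume a: "a \<in> anticomm_qubits P Q"
  then have "a div k < m"
    using anticomm_qubits_subset[OF P] anticomm_qubits_sym block_index_less[OF k] by blast
  moreover have "a mod k \<in> anticomm_qubits (block k (a div k) P) (block k (a div k) Q)"
    using a k by (simp add: anticomm_qubits_def block_def)
  ultimately show "a \<in> (\<Union>i<m. (\<lambda>j. i * k + j) ` anticomm_qubits (block k i P) (block k i Q))"
    by (intro UN_I image_eqI[of _ _ "a mod k"]) auto
qed (auto simp: anticomm_qubits_def block_def split: if_splits)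

lemma commutes_iff_blocks:
  assumes k: "0 < k" and P: "P \<in> pauli_on (m * k)"
  shows "commutes P Q \<longleftrightarrow> even (card {i \<in> {..<m}. \<not> commutes (block k i P) (block k i Q)})"
proof -
  let ?A = "\<lambda>i. anticomm_qubits (block k i P) (block k i Q)"
  have sub: "?A i \<subseteq> {..<k}" for i
    by (rule anticomm_qubits_subset[OF block_in_pauli_on])
  have "card (anticomm_qubits P Q) = (\<Sum>i<m. card ((\<lambda>j. i * k + j) ` ?A i))"
    unfolding anticomm_qubits_blocks[OF k P]
  proof (rule card_UN_disjoint)
    show "\<forall>i\<in>{..<m}. finite ((\<lambda>j. i * k + j) ` ?A i)"
      by (simp add: finite_anticomm_qubits[OF block_in_pauli_on])
    have "i * k + j \<noteq> i' * k + j'" if "j < k" "j' < k" "i \<noteq> i'" for i i' j j'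
      using div_mod_block(1)[of j k i] div_mod_block(1)[of j' k i'] that by metis
    then show "\<forall>i\<in>{..<m}. \<forall>i'\<in>{..<m}. i \<noteq> i' \<longrightarrow> (\<lambda>j. i * k + j) ` ?A i \<inter> (\<lambda>j. i' * k + j) ` ?A i' = {}"
      using sub by blast
  qed simp
  also have "\<dots> = (\<Sum>i<m. card (?A i))"
    by (intro sum.cong refl card_image) (simp add: inj_on_def)
  finally show ?thesis
    by (simp add: commutes_iff_even even_sum_iff)
qed

section \<open>Disjointness\<close>

definition disjoint_reps :: "nat \<Rightarrow> pauli set \<Rightarrow> nat \<Rightarrow> nat \<Rightarrow> bool" where
  "disjoint_reps n T c a \<longleftrightarrow> (\<forall>L \<in> logicals n T. \<exists>R. R \<subseteq> L \<and> finite R \<and> a \<le> card R \<and> c_disjoint c R)"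

lemma udisj_eq_Greatest: "udisj n T c = (GREATEST a. disjoint_reps n T c a)"
  by (simp add: udisj_def disjoint_reps_def)

lemma disjoint_reps_zero: "disjoint_reps n T c 0"
  unfolding disjoint_reps_def c_disjoint_def by (intro ballI exI[of _ "{}"]) simp

lemma logical_class_subset:
  assumes T: "pauli_subgroup n T" and "L \<in> logicals n T"
  shows "L \<subseteq> pauli_on n - {pid}"
proof -
  obtain p where L: "L = pmul p ` T" and p: "p \<in> normaliser n T - T"
    using assms(2) unfolding logicals_def by blast
  show ?thesis
    unfolding L
  proof (rule image_subsetI)
    fix t assume t: "t \<in> T"
    have "pmul p t \<in> pauli_on n"
      using p t pauli_subgroupD(1)[OF T] by (intro pauli_on_pmul) (auto simp: normaliser_def)
    moreover have "pmul p t \<noteq> pid"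
      using p t by (auto simp: pmul_eq_pid_iff)
    ultimately show "pmul p t \<in> pauli_on n - {pid}"
      by simp
  qed
qed

text \<open>Double counting: each operator meets at least one of the \<open>n\<close> qubits, and each qubit
  is met at most \<open>c\<close> times.\<close>
lemma card_le_c_disjoint:
  assumes R: "R \<subseteq> pauli_on n - {pid}" "finite R" and disj: "c_disjoint c R"
  shows "card R \<le> c * n"
proof -
  have sub: "supp r \<subseteq> {..<n}" and nonempty: "supp r \<noteq> {}" if "r \<in> R" for r
    using that R(1) supp_subset_pauli_on[of r n] supp_eq_empty_iff[of r] by auto
  have "card R = (\<Sum>r\<in>R. 1)"
    by simp
  also have "\<dots> \<le> (\<Sum>r\<in>R. card (supp r))"
  proof (rule sum_mono)
    fix r assume "r \<in> R"
    then have "finite (supp r)"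
      using finite_subset[OF sub] by blast
    then show "1 \<le> card (supp r)"
      using nonempty[OF \<open>r \<in> R\<close>] by (simp add: Suc_le_eq card_gt_0_iff)
  qed
  also have "\<dots> = (\<Sum>r\<in>R. \<Sum>q<n. if q \<in> supp r then 1 else 0)"
  proof (intro sum.cong refl)
    fix r assume "r \<in> R"
    then have "supp r = {q \<in> {..<n}. q \<in> supp r}"
      using sub by blast
    then show "card (supp r) = (\<Sum>q<n. if q \<in> supp r then 1 else 0)"
      using card_filter_eq_sum[of "{..<n}" "\<lambda>q. q \<in> supp r"] by simp
  qed
  also have "\<dots> = (\<Sum>q<n. \<Sum>r\<in>R. if q \<in> supp r then 1 else 0)"
    by (rule sum.swap)
  also have "\<dots> = (\<Sum>q<n. card {r \<in> R. q \<in> supp r})"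
    using R(2) by (simp add: card_filter_eq_sum)
  also have "\<dots> \<le> (\<Sum>q<n. c)"
    using disj by (intro sum_mono) (simp add: c_disjoint_def)
  finally show ?thesis
    by (simp add: mult.commute)
qed

lemma disjoint_reps_le:
  assumes T: "pauli_subgroup n T" and ex: "normaliser n T - T \<noteq> {}" and H: "disjoint_reps n T c a"
  shows "a \<le> c * n"
proof -
  obtain p where "p \<in> normaliser n T - T"
    using ex by blast
  then have "pmul p ` T \<in> logicals n T"
    by (auto simp: logicals_def)
  then obtain R where R: "R \<subseteq> pmul p ` T" "finite R" "a \<le> card R" "c_disjoint c R"
    using H by (auto simp: disjoint_reps_def)
  then have "R \<subseteq> pauli_on n - {pid}"
    using logical_class_subset[OF T \<open>pmul p ` T \<in> logicals n T\<close>] by blast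
  then have "card R \<le> c * n"
    using card_le_c_disjoint R(2,4) by blast
  then show ?thesis
    using R(3) by simp
qed

lemma disjointness_ge:
  assumes T: "pauli_subgroup n T" and ex: "normaliser n T - T \<noteq> {}"
    and c: "1 \<le> c" and H: "disjoint_reps n T c a"
  shows "real a / real c \<le> disjointness n T"
proof -
  have udisj_le: "udisj n T c' \<le> c' * n" for c'
  proof -
    have "disjoint_reps n T c' (GREATEST a. disjoint_reps n T c' a)"
      by (rule GreatestI_nat[where k = 0 and b = "c' * n"])
        (simp_all add: disjoint_reps_zero disjoint_reps_le[OF T ex])
    then show ?thesis
      unfolding udisj_eq_Greatest by (rule disjoint_reps_le[OF T ex])
  qed
  have "a \<le> udisj n T c"
    unfolding udisj_eq_Greatest
    by (rule Greatest_le_nat[where b = "c * n"], rule H, rule disjoint_reps_le[OF T ex])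
  then have "real a / real c \<le> real (udisj n T c) / real c"
    by (simp add: divide_right_mono)
  also have "\<dots> \<le> disjointness n T"
    unfolding disjointness_def
  proof (rule cSup_upper)
    show "real (udisj n T c) / real c \<in> {real (udisj n T c) / real c | c. c \<ge> 1}"
      using c by blast
    show "bdd_above {real (udisj n T c) / real c | c. c \<ge> 1}"
    proof (rule bdd_aboveI)
      fix x assume "x \<in> {real (udisj n T c) / real c | c. c \<ge> 1}"
      then obtain c' where "x = real (udisj n T c') / real c'" "1 \<le> c'"
        by blast
      moreover have "real (udisj n T c') \<le> real c' * real n"
        using udisj_le[of c'] by (simp flip: of_nat_mult)
      ultimately show "x \<le> real n"
        by (simp add: divide_le_eq mult.commute)
    qed
  qed
  finally show ?thesis .
qed

locale concatenation = inner_code k S xb zb for k S xb zb +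
  fixes m :: nat and T :: "pauli set"
  assumes outer_subgroup: "pauli_subgroup m T"
begin

abbreviation encode :: "pauli \<Rightarrow> pauli" where
  "encode \<equiv> enc k xb zb"

abbreviation concat :: "pauli set" where
  "concat \<equiv> concat_stab m T k S xb zb"

definition inner_stab :: "pauli set" where
  "inner_stab = {t \<in> pauli_on (m * k). \<forall>i<m. block k i t \<in> S}"

lemma concat_iff: "x \<in> concat \<longleftrightarrow> (\<exists>s t. x = pmul (encode s) t \<and> s \<in> T \<and> t \<in> inner_stab)"
  by (auto simp: concat_stab_def inner_stab_def)

lemma k_pos: "0 < k"
  using one_le_k by simp

lemma block_encode: "block k i (encode p) = logical (p i)"
proof
  fix j show "block k i (encode p) j = logical (p i) j"
    using logical_in_pauli_on[of "p i"] k_pos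
    by (cases "j < k") (simp_all add: block_def enc_apply pauli_on_outside)
qed

lemma encode_in_pauli_on:
  assumes "p \<in> pauli_on m"
  shows "encode p \<in> pauli_on (m * k)"
  unfolding pauli_on_def
proof (intro CollectI allI impI)
  fix a assume "m * k \<le> a"
  then have "m \<le> a div k"
    using k_pos div_le_mono[of "m * k" a k] by simp
  then show "encode p a = (False, False)"
    using assms by (simp add: pauli_on_def enc_apply)
qed

lemma pid_in_inner_stab: "pid \<in> inner_stab"
  by (simp add: inner_stab_def pid_in_stab)

lemma inner_stab_pmul: "t \<in> inner_stab \<Longrightarrow> t' \<in> inner_stab \<Longrightarrow> pmul t t' \<in> inner_stab"
  by (simp add: inner_stab_def block_pmul stab_pmul pauli_on_pmul)

lemma encode_in_concat: "s \<in> T \<Longrightarrow> encode s \<in> concat"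
  unfolding concat_iff using pid_in_inner_stab by (intro exI[of _ s] exI[of _ pid]) simp

lemma pauli_subgroup_concat: "pauli_subgroup (m * k) concat"
  unfolding pauli_subgroup_def
proof (intro conjI ballI subsetI)
  fix x assume "x \<in> concat"
  then obtain s t where "x = pmul (encode s) t" "s \<in> T" "t \<in> inner_stab"
    by (auto simp: concat_iff)
  then show "x \<in> pauli_on (m * k)"
    using outer_subgroup encode_in_pauli_on
    by (auto simp: inner_stab_def pauli_subgroup_def intro!: pauli_on_pmul)
next
  show "pid \<in> concat"
    using encode_in_concat pauli_subgroupD(2)[OF outer_subgroup] by fastforce
next
  fix x y assume "x \<in> concat" "y \<in> concat"
  then obtain s t s' t' where "x = pmul (encode s) t" "s \<in> T" "t \<in> inner_stab"
    and "y = pmul (encode s') t'" "s' \<in> T" "t' \<in> inner_stab"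
    by (auto simp: concat_iff)
  moreover have
    "pmul (pmul (encode s) t) (pmul (encode s') t') = pmul (encode (pmul s s')) (pmul t t')"
    by (simp add: enc_pmul[symmetric] pmul.assoc pmul.commute pmul.left_commute)
  ultimately show "pmul x y \<in> concat"
    unfolding concat_iff using pauli_subgroupD(3)[OF outer_subgroup] inner_stab_pmul by blast
qed

text \<open>The logical content of block \<open>i\<close>: its X-part is detected by \<open>zb\<close>, its Z-part by \<open>xb\<close>.\<close>
definition decode :: "pauli \<Rightarrow> pauli" where
  "decode P = (\<lambda>i. if i < m then (\<not> commutes (block k i P) zb, \<not> commutes (block k i P) xb)
                   else (False, False))"

lemma decode_in_pauli_on: "decode P \<in> pauli_on m"
  by (simp add: decode_def pauli_on_def)

lemma anticommutes_logical_iff_decode: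
  "i < m \<Longrightarrow> \<not> commutes (block k i P) (logical v) \<longleftrightarrow> anti1 (decode P i) v"
  using commutes_logical[OF block_in_pauli_on, of i P v] by (auto simp: decode_def anti1_def)

lemma commutes_encode_iff:
  assumes P: "P \<in> pauli_on (m * k)"
  shows "commutes P (encode s) \<longleftrightarrow> commutes (decode P) s"
proof -
  have blocks:
    "{i \<in> {..<m}. \<not> commutes (block k i P) (block k i (encode s))} = anticomm_qubits (decode P) s"
  proof (intro set_eqI)
    fix i show "i \<in> {i \<in> {..<m}. \<not> commutes (block k i P) (block k i (encode s))} \<longleftrightarrow>
                i \<in> anticomm_qubits (decode P) s"
    proof (cases "i < m")
      case True
      then show ?thesis
        using anticommutes_logical_iff_decode[OF True, of P "s i"]
        by (simp add: anticomm_qubits_def block_encode)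
    next
      case False
      then show ?thesis
        by (simp add: anticomm_qubits_def decode_def)
    qed
  qed
  have "commutes P (encode s) \<longleftrightarrow>
      even (card {i \<in> {..<m}. \<not> commutes (block k i P) (block k i (encode s))})"
    by (rule commutes_iff_blocks[OF k_pos P])
  also have "\<dots> \<longleftrightarrow> commutes (decode P) s"
    by (simp only: blocks commutes_iff_even[of "decode P" s])
  finally show ?thesis .
qed

lemma decode_pmul: "decode (pmul P Q) = pmul (decode P) (decode Q)"
proof
  fix i show "decode (pmul P Q) i = pmul (decode P) (decode Q) i"
    by (auto simp: decode_def block_pmul commutes_pmul_left[OF xb_in_pauli_on]
        commutes_pmul_left[OF zb_in_pauli_on] pmul_apply qubit_mul_def)
qed

lemma decode_encode: "p \<in> pauli_on m \<Longrightarrow> decode (encode p) = p"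
  by (auto simp: decode_def fun_eq_iff block_encode logical_commutes_xb logical_commutes_zb pauli_on_def)

lemma decode_inner_stab: "t \<in> inner_stab \<Longrightarrow> decode t = pid"
  using stab_commutes_xb stab_commutes_zb by (auto simp: inner_stab_def decode_def fun_eq_iff)

lemma decode_concat: "x \<in> concat \<Longrightarrow> decode x \<in> T"
  using outer_subgroup
  by (auto simp: concat_iff decode_pmul decode_encode decode_inner_stab pauli_subgroup_def)

definition embed :: "nat \<Rightarrow> pauli \<Rightarrow> pauli" where
  "embed i u = (\<lambda>a. if a div k = i then u (a mod k) else (False, False))"

lemma block_embed: "u \<in> pauli_on k \<Longrightarrow> block k i' (embed i u) = (if i' = i then u else pid)"
  by (auto simp: block_def embed_def fun_eq_iff pauli_on_def)

lemma embed_in_inner_stab: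
  assumes "i < m" "u \<in> S"
  shows "embed i u \<in> inner_stab"
proof -
  have "embed i u \<in> pauli_on (m * k)"
    using assms(1) k_pos div_le_mono[of "m * k" _ k] by (fastforce simp: pauli_on_def embed_def)
  then show ?thesis
    using assms stab_subset pid_in_stab by (auto simp: inner_stab_def block_embed)
qed

lemma commutes_embed_iff:
  assumes P: "P \<in> pauli_on (m * k)" and i: "i < m" and u: "u \<in> pauli_on k"
  shows "commutes P (embed i u) \<longleftrightarrow> commutes (block k i P) u"
proof -
  have "{i' \<in> {..<m}. \<not> commutes (block k i' P) (block k i' (embed i u))} =
        (if commutes (block k i P) u then {} else {i})"
    using i by (auto simp: block_embed[OF u])
  then show ?thesis
    by (simp add: commutes_iff_blocks[OF k_pos P])
qed

lemma inner_stab_subset_concat: "t \<in> inner_stab \<Longrightarrow> t \<in> concat"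
  unfolding concat_iff using pauli_subgroupD(2)[OF outer_subgroup]
  by (intro exI[of _ pid] exI[of _ t]) simp

lemma decode_normaliser:
  assumes p: "p \<in> normaliser (m * k) concat"
  shows "decode p \<in> normaliser m T"
proof -
  have "commutes (decode p) s" if "s \<in> T" for s
    using p encode_in_concat[OF that] commutes_encode_iff[of p s] by (simp add: normaliser_def)
  then show ?thesis
    using decode_in_pauli_on by (simp add: normaliser_def)
qed

text \<open>Each block of the remainder lies in the inner normaliser and, by the choice of \<open>decode\<close>,
  commutes with both logical operators.\<close>
lemma normaliser_remainder_inner_stab:
  assumes p: "p \<in> normaliser (m * k) concat"
  shows "pmul p (encode (decode p)) \<in> inner_stab"
proof -
  have pP: "p \<in> pauli_on (m * k)"
    using p by (simp add: normaliser_def)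
  have "block k i (pmul p (encode (decode p))) \<in> S" if i: "i < m" for i
  proof -
    define w where "w = pmul (block k i p) (logical (decode p i))"
    have "commutes w u" if u: "u \<in> S" for u
    proof -
      have uP: "u \<in> pauli_on k"
        using u stab_subset by blast
      have "commutes p (embed i u)"
        using p inner_stab_subset_concat[OF embed_in_inner_stab[OF i u]] by (simp add: normaliser_def)
      then have "commutes (block k i p) u"
        using commutes_embed_iff[OF pP i uP] by simp
      then show ?thesis
        using normaliser_commutes[OF logical_in_normaliser u]
        by (simp add: w_def commutes_pmul_left[OF uP])
    qed
    then have "w \<in> normaliser k S"
      using block_in_pauli_on logical_in_pauli_on by (simp add: w_def normaliser_def pauli_on_pmul)
    moreover have "commutes w xb" "commutes w zb"
      using i by (simp_all add: w_def commutes_pmul_left[OF xb_in_pauli_on]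
          commutes_pmul_left[OF zb_in_pauli_on] logical_commutes_xb logical_commutes_zb decode_def)
    ultimately have "w \<in> S"
      by (rule normaliser_commuting_with_logicals)
    then show ?thesis
      by (simp add: w_def block_pmul block_encode)
  qed
  then show ?thesis
    using pP encode_in_pauli_on[OF decode_in_pauli_on] by (simp add: inner_stab_def pauli_on_pmul)
qed

lemma decode_logical:
  assumes p: "p \<in> normaliser (m * k) concat - concat"
  shows "decode p \<in> normaliser m T - T"
proof -
  have "decode p \<notin> T"
  proof
    assume "decode p \<in> T"
    moreover have "p = pmul (encode (decode p)) (pmul p (encode (decode p)))"
      by (metis pmul.commute pmul_cancel_left)
    moreover have "pmul p (encode (decode p)) \<in> inner_stab"
      using normaliser_remainder_inner_stab p by blast
    ultimately have "p \<in> concat"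
      unfolding concat_iff by blast
    then show False
      using p by blast
  qed
  then show ?thesis
    using decode_normaliser p by blast
qed

lemma encode_logical:
  assumes p: "p \<in> normaliser m T - T"
  shows "encode p \<in> normaliser (m * k) concat - concat"
proof -
  have pP: "p \<in> pauli_on m" and eP: "encode p \<in> pauli_on (m * k)"
    using p encode_in_pauli_on by (auto simp: normaliser_def)
  have "commutes (encode p) x" if x: "x \<in> concat" for x
  proof -
    obtain s t where st: "x = pmul (encode s) t" "s \<in> T" "t \<in> inner_stab"
      using x by (auto simp: concat_iff)
    have "commutes (encode p) (encode s)"
      using p st(2) by (simp add: commutes_encode_iff[OF eP] decode_encode[OF pP] normaliser_def)
    moreover have "commutes (encode p) t"
    proof -
      have "{i \<in> {..<m}. \<not> commutes (block k i (encode p)) (block k i t)} = {}"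
        using st(3) logical_in_normaliser by (auto simp: inner_stab_def normaliser_def block_encode)
      then show ?thesis
        unfolding commutes_iff_blocks[OF k_pos eP] by (simp only: card.empty even_zero)
    qed
    ultimately show ?thesis
      by (simp add: st(1) commutes_pmul_right[OF eP])
  qed
  moreover have "encode p \<notin> concat"
    using p decode_concat decode_encode[OF pP] by force
  ultimately show ?thesis
    using eP by (simp add: normaliser_def)
qed

definition spread :: "pauli \<Rightarrow> pauli \<Rightarrow> pauli" where
  "spread r u = (\<lambda>a. if a < m * k \<and> r (a div k) \<noteq> (False, False) then u (a mod k) else (False, False))"

definition concat_rep :: "pauli \<Rightarrow> pauli \<Rightarrow> pauli" where
  "concat_rep r u = pmul (encode r) (spread r u)"

lemma block_spread:
  assumes u: "u \<in> pauli_on k" and i: "i < m"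
  shows "block k i (spread r u) = (if r i \<noteq> (False, False) then u else pid)"
proof
  fix j show "block k i (spread r u) j = (if r i \<noteq> (False, False) then u else pid) j"
  proof (cases "j < k")
    case True
    have "Suc i * k \<le> m * k"
      using i by (intro mult_le_mono1) simp
    then have "i * k + j < m * k"
      using True by simp
    then show ?thesis
      using True by (simp add: block_def spread_def)
  next
    case False
    then show ?thesis
      using u by (simp add: block_def pauli_on_def)
  qed
qed

lemma spread_in_pauli_on: "spread r u \<in> pauli_on (m * k)"
  by (simp add: spread_def pauli_on_def)

lemma spread_in_inner_stab:
  assumes "u \<in> S"
  shows "spread r u \<in> inner_stab"
proof -
  have "block k i (spread r u) \<in> S" if "i < m" for i
    using block_spread[OF _ that, of u r] assms stab_subset pid_in_stab by auto
  then show ?thesis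
    using spread_in_pauli_on by (simp add: inner_stab_def)
qed

lemma block_concat_rep:
  "u \<in> pauli_on k \<Longrightarrow> i < m \<Longrightarrow>
    block k i (concat_rep r u) = pmul (logical (r i)) (if r i \<noteq> (False, False) then u else pid)"
  by (simp add: concat_rep_def block_pmul block_encode block_spread)

lemma concat_rep_in_pauli_on: "r \<in> pauli_on m \<Longrightarrow> concat_rep r u \<in> pauli_on (m * k)"
  unfolding concat_rep_def using encode_in_pauli_on spread_in_pauli_on by (rule pauli_on_pmul)

lemma concat_rep_in_coset:
  assumes p: "p \<in> normaliser (m * k) concat" and s: "s \<in> T" and u: "u \<in> S"
  shows "concat_rep (pmul (decode p) s) u \<in> pmul p ` concat"
proof -
  define U where "U = pmul p (encode (decode p))"
  define x where "x = pmul (encode s) (pmul U (spread (pmul (decode p) s) u))"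
  have "x \<in> concat"
    unfolding concat_iff x_def U_def
    using s inner_stab_pmul[OF normaliser_remainder_inner_stab[OF p] spread_in_inner_stab[OF u]] by blast
  moreover have "concat_rep (pmul (decode p) s) u = pmul p x"
    by (simp add: concat_rep_def x_def U_def pmul.assoc pmul.commute pmul.left_commute flip: enc_pmul)
  ultimately show ?thesis
    by blast
qed

lemma inj_on_concat_rep:
  assumes R: "R \<subseteq> pauli_on m - {pid}"
  shows "inj_on (case_prod concat_rep) (R \<times> S)"
proof (rule inj_onI, clarify)
  fix r1 u1 r2 u2
  assume r: "r1 \<in> R" "r2 \<in> R" and u: "u1 \<in> S" "u2 \<in> S" and eq: "concat_rep r1 u1 = concat_rep r2 u2"
  have uP: "u1 \<in> pauli_on k" "u2 \<in> pauli_on k"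
    using u stab_subset by blast+
  have blocks: "pmul (logical (r1 i)) (if r1 i \<noteq> (False, False) then u1 else pid) =
      pmul (logical (r2 i)) (if r2 i \<noteq> (False, False) then u2 else pid)" if "i < m" for i
    using arg_cong[OF eq, of "block k i"] by (simp add: block_concat_rep uP that)
  have "r1 i = r2 i" for i
  proof (cases "i < m")
    case True
    then show ?thesis
      using logical_stab_inj(1)[OF _ _ blocks] u pid_in_stab by simp
  next
    case False
    moreover have "r1 \<in> pauli_on m" "r2 \<in> pauli_on m"
      using r R by auto
    ultimately show ?thesis
      by (simp add: pauli_on_outside)
  qed
  then have "r1 = r2" ..
  obtain i where i: "r1 i \<noteq> (False, False)"
    using r R by (auto simp: pid_def fun_eq_iff)
  moreover have "i < m"
    using i r R pauli_on_nonzero_less by blast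
  ultimately have "pmul (logical (r1 i)) u1 = pmul (logical (r1 i)) u2"
    using blocks[OF \<open>i < m\<close>] \<open>r1 = r2\<close> by simp
  then show "r1 = r2 \<and> u1 = u2"
    using \<open>r1 = r2\<close> by (simp add: pmul_left_cancel)
qed

lemma supp_concat_rep:
  assumes u: "u \<in> pauli_on k" and a: "a < m * k" "a \<in> supp (concat_rep r u)"
  shows "r (a div k) \<noteq> (False, False)" "pmul (logical (r (a div k))) u (a mod k) \<noteq> (False, False)"
proof -
  have "concat_rep r u a = block k (a div k) (concat_rep r u) (a mod k)"
    using k_pos by (simp add: block_def)
  also have "\<dots> = pmul (logical (r (a div k))) (if r (a div k) \<noteq> (False, False) then u else pid) (a mod k)"
    using block_concat_rep[OF u block_index_less[OF k_pos a(1)]] by simp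
  finally show "r (a div k) \<noteq> (False, False)"
    and "pmul (logical (r (a div k))) u (a mod k) \<noteq> (False, False)"
    using a(2) by (auto simp: supp_def split: if_splits)
qed

lemma c_disjoint_concat_reps:
  assumes R: "R \<subseteq> pauli_on m" "finite R" "c_disjoint c R"
  shows "c_disjoint (c * overlap_bound) (case_prod concat_rep ` (R \<times> S))"
  unfolding c_disjoint_def
proof
  fix a
  show "card {y \<in> case_prod concat_rep ` (R \<times> S). a \<in> supp y} \<le> c * overlap_bound"
  proof (cases "a < m * k")
    case False
    then have "{y \<in> case_prod concat_rep ` (R \<times> S). a \<in> supp y} = {}"
      using R(1) concat_rep_in_pauli_on by (auto simp: supp_def pauli_on_def)
    then show ?thesis
      by (simp only: card.empty le0)
  next
    case True
    define A where "A = {r \<in> R. a div k \<in> supp r}"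
    define B where "B r = {u \<in> S. pmul (logical (r (a div k))) u (a mod k) \<noteq> (False, False)}" for r
    have finAB: "finite (Sigma A B)"
      using R(2) finite_stab by (auto simp: A_def B_def)
    have "{y \<in> case_prod concat_rep ` (R \<times> S). a \<in> supp y} \<subseteq> case_prod concat_rep ` Sigma A B"
      using supp_concat_rep[OF _ True] stab_subset by (fastforce simp: A_def B_def supp_def)
    then have "card {y \<in> case_prod concat_rep ` (R \<times> S). a \<in> supp y} \<le> card (Sigma A B)"
      using finAB by (meson card_image_le card_mono finite_imageI order_trans)
    also have "\<dots> = (\<Sum>r\<in>A. card (B r))"
      using finAB by (intro card_SigmaI) (auto simp: A_def B_def R(2) finite_stab)
    also have "\<dots> \<le> card A * overlap_bound"
      using sum_mono[of A "\<lambda>r. card (B r)" "\<lambda>_. overlap_bound"]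
        card_coset_nontrivial_at_le[OF logical_in_normaliser] by (simp add: B_def)
    also have "\<dots> \<le> c * overlap_bound"
      using R(3) by (simp add: A_def c_disjoint_def)
    finally show ?thesis .
  qed
qed

lemma disjoint_reps_concat:
  assumes "disjoint_reps m T c a"
  shows "disjoint_reps (m * k) concat (c * overlap_bound) (a * card S)"
  unfolding disjoint_reps_def
proof
  fix L assume "L \<in> logicals (m * k) concat"
  then obtain p where L: "L = pmul p ` concat" and p: "p \<in> normaliser (m * k) concat - concat"
    unfolding logicals_def by blast
  have "pmul (decode p) ` T \<in> logicals m T"
    using decode_logical[OF p] by (auto simp: logicals_def)
  then obtain R where R: "R \<subseteq> pmul (decode p) ` T" "finite R" "a \<le> card R" "c_disjoint c R"
    using assms by (auto simp: disjoint_reps_def)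
  have RP: "R \<subseteq> pauli_on m - {pid}"
    using R(1) logical_class_subset[OF outer_subgroup \<open>pmul (decode p) ` T \<in> logicals m T\<close>] by blast
  define R' where "R' = case_prod concat_rep ` (R \<times> S)"
  have "R' \<subseteq> L"
    using R(1) concat_rep_in_coset p by (auto simp: R'_def L)
  moreover have "card R' = card R * card S"
    unfolding R'_def using card_image[OF inj_on_concat_rep[OF RP]] by (simp add: card_cartesian_product)
  moreover have "finite R'"
    using R(2) finite_stab by (simp add: R'_def)
  moreover have "c_disjoint (c * overlap_bound) R'"
    unfolding R'_def using RP R(2,4) by (intro c_disjoint_concat_reps) auto
  ultimately show "\<exists>R. R \<subseteq> L \<and> finite R \<and> a * card S \<le> card R \<and> c_disjoint (c * overlap_bound) R"
    using R(3) by (intro exI[of _ R']) simp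
qed

end

section \<open>Disjointness grows geometrically along the family\<close>

definition disjointness_certificate :: "nat \<Rightarrow> pauli set \<Rightarrow> real \<Rightarrow> bool" where
  "disjointness_certificate n T x \<longleftrightarrow> pauli_subgroup n T \<and> normaliser n T - T \<noteq> {} \<and>
     (\<exists>a c. 1 \<le> c \<and> x \<le> real a / real c \<and> disjoint_reps n T c a)"

lemma disjointness_certificate_le: "disjointness_certificate n T x \<Longrightarrow> x \<le> disjointness n T"
  unfolding disjointness_certificate_def using disjointness_ge by (meson order_trans)

lemma (in encoded_qubit) disjointness_certificate_code: "disjointness_certificate k S 1"
proof -
  have "disjoint_reps k S 1 1"
    unfolding disjoint_reps_def
  proof
    fix L assume "L \<in> logicals k S"
    then obtain p where "L = pmul p ` S"
      unfolding logicals_def by blast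
    then have "p \<in> L"
      using pid_in_stab by (simp add: image_iff) (metis pmul.right_neutral)
    moreover have "c_disjoint 1 {p}"
      by (simp add: c_disjoint_def card_le_Suc0_iff_eq)
    ultimately show "\<exists>R. R \<subseteq> L \<and> finite R \<and> 1 \<le> card R \<and> c_disjoint 1 R"
      by (intro exI[of _ "{p}"]) simp
  qed
  moreover have "xb \<in> normaliser k S - S"
    using xb_normaliser xb_notin_stab by blast
  ultimately show ?thesis
    unfolding disjointness_certificate_def using subgroup by fastforce
qed

lemma (in concatenation) disjointness_certificate_concat:
  assumes "disjointness_certificate m T x" "0 \<le> x"
  shows "disjointness_certificate (m * k) concat (4 / 3 * x)"
proof -
  obtain a c where ac: "1 \<le> c" "x \<le> real a / real c" "disjoint_reps m T c a"
    and ex: "normaliser m T - T \<noteq> {}"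
    using assms(1) by (auto simp: disjointness_certificate_def)
  have "4 / 3 * x \<le> real (card S) / real overlap_bound * (real a / real c)"
    using overlap_bound_ratio ac(2) assms(2) by (intro mult_mono) auto
  also have "\<dots> = real (a * card S) / real (c * overlap_bound)"
    by (simp add: mult.commute)
  finally have "4 / 3 * x \<le> real (a * card S) / real (c * overlap_bound)" .
  moreover have "1 \<le> c * overlap_bound"
    using ac(1) one_le_overlap_bound by (simp add: one_le_mult_iff)
  moreover have "normaliser (m * k) concat - concat \<noteq> {}"
    using ex encode_logical by blast
  ultimately show ?thesis
    unfolding disjointness_certificate_def
    using pauli_subgroup_concat disjoint_reps_concat[OF ac(3)] by blast
qed

lemma disjointness_certificate_concat_stab:
  assumes "inner_code k S xb zb" "disjointness_certificate m T x" "0 \<le> x"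
  shows "disjointness_certificate (m * k) (concat_stab m T k S xb zb) (4 / 3 * x)"
proof -
  interpret concatenation k S xb zb m T
    using assms(1,2)
    by (simp add: concatenation_def concatenation_axioms_def disjointness_certificate_def)
  show ?thesis
    by (rule disjointness_certificate_concat[OF assms(2,3)])
qed

theorem theorem3:
  fixes n :: "nat \<Rightarrow> nat" and S :: "nat \<Rightarrow> pauli set" and d :: "nat \<Rightarrow> nat"
    and xb zb :: "nat \<Rightarrow> pauli" and B :: nat
  assumes codes: "\<And>i. stab_code (n i) (S i) (d i)"
    and nontrivial: "\<And>i. d i \<ge> 2"
    and bounded: "\<And>i. n i \<le> B"
    and logical_basis: "\<And>i. xb i \<in> normaliser (n i) (S i) \<and> zb i \<in> normaliser (n i) (S i)
                              \<and> \<not> commutes (xb i) (zb i)"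
  shows "filterlim (\<lambda>l. disjointness (fst (fam n S xb zb l)) (snd (fam n S xb zb l)))
           at_top sequentially"
proof -
  have inner: "inner_code (n i) (S i) (xb i) (zb i)" for i
    using codes[of i] nontrivial[of i] logical_basis[of i]
    by unfold_locales (simp_all add: stab_code_def)
  have certificate:
    "disjointness_certificate (fst (fam n S xb zb l)) (snd (fam n S xb zb l)) ((4 / 3) ^ l)" for l
  proof (induction l)
    case 0
    show ?case
      using encoded_qubit.disjointness_certificate_code[OF inner_code.axioms(1)[OF inner]] by simp
  next
    case (Suc l)
    obtain m T where mT: "fam n S xb zb l = (m, T)"
      by fastforce
    then have "disjointness_certificate m T ((4 / 3) ^ l)"
      using Suc.IH by simp
    then have "disjointness_certificate (m * n (Suc l))
        (concat_stab m T (n (Suc l)) (S (Suc l)) (xb (Suc l)) (zb (Suc l))) (4 / 3 * (4 / 3) ^ l)"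
      by (rule disjointness_certificate_concat_stab[OF inner]) simp
    then show ?case
      using mT by simp
  qed
  have "filterlim (\<lambda>l. (4 / 3 :: real) ^ l) at_top sequentially"
    by (rule filterlim_at_infinity_imp_filterlim_at_top[OF filterlim_realpow_sequentially_gt1]) simp_all
  then show ?thesis
    by (rule filterlim_at_top_mono) (simp add: certificate disjointness_certificate_le)
qed

end
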